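(* Let $n>0$ and let $\mathbf{s},\hat{\mathbf{s}}\in\mathbb{R}_{\ge0}^{G_\Delta}$ be such that $\|\mathbf{s}\|_1=n$ and $\|\mathbf{s}-\hat{\mathbf{s}}\|_{\mathrm{EMD}}\le n/2$. Let $\mathbf{a}=\mathbf{s}/\|\mathbf{s}\|_1$ and $\hat{\mathbf{a}}=\hat{\mathbf{s}}/\|\hat{\mathbf{s}}\|_1$. Then $\|\mathbf{a}-\hat{\mathbf{a}}\|_{\mathrm{EMD}}\le 4\|\mathbf{s}-\hat{\mathbf{s}}\|_{\mathrm{EMD}}/n$.
   Context: For $\Delta=2^\ell$, $G_\Delta=\{(i/\Delta,j/\Delta): i,j\in\{0,\dots,\Delta-1\}\}$. For $\mathbf{p},\mathbf{q}\in\mathbb{R}_{\ge0}^{G_\Delta}$ with $\|\mathbf{p}\|_1=\|\mathbf{q}\|_1$, $\mathrm{EMD}(\mathbf{p},\mathbf{q})=\min_\gamma\sum_{x,y\in G_\Delta}\gamma(x,y)\|x-y\|_1$ over $\gamma\in\mathbb{R}_{\ge0}^{G_\Delta\times G_\Delta}$ with marginals $\mathbf{p},\mathbf{q}$. The EMD norm of $\mathbf{w}\in\mathbb{R}^{G_\Delta}$ is $\|\mathbf{w}\|_{\mathrm{EMD}}=\min\{\mathrm{EMD}(\mathbf{p},\mathbf{q})+2\|\mathbf{r}\|_1\}$, the minimum over $\mathbf{p},\mathbf{q}\in\mathbb{R}_{\ge0}^{G_\Delta}$ and $\mathbf{r}\in\mathbb{R}^{G_\Delta}$ with $\mathbf{p}-\mathbf{q}+\mathbf{r}=\mathbf{w}$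 and $\|\mathbf{p}\|_1=\|\mathbf{q}\|_1$. *)

theory Defs
  imports Complex_Main
begin

text \<open>The grid G_Delta for Delta = 2^l, as a finite set of points in the plane.\<close>
definition grid :: "nat \<Rightarrow> (real \<times> real) set" where
  "grid l = {(real i / 2 ^ l, real j / 2 ^ l) | i j. i < 2 ^ l \<and> j < 2 ^ l}"

definition l1dist :: "real \<times> real \<Rightarrow> real \<times> real \<Rightarrow> real" where
  "l1dist x y = \<bar>fst x - fst y\<bar> + \<bar>snd x - snd y\<bar>"

text \<open>Vectors in R^G are functions; only their values on G matter.
  Transport plans gamma with marginals p and q on G.\<close>
definition couplings :: "(real \<times> real) set \<Rightarrow> (real \<times> real \<Rightarrow> real) \<Rightarrow> (real \<times> real \<Rightarrow> real)
    \<Rightarrow> ((real \<times> real) \<times> (real \<times> real) \<Rightarrow> real) set" where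
  "couplings G p q = {\<gamma>. (\<forall>x\<in>G. \<forall>y\<in>G. \<gamma> (x, y) \<ge> 0) \<and>
      (\<forall>x\<in>G. (\<Sum>y\<in>G. \<gamma> (x, y)) = p x) \<and> (\<forall>y\<in>G. (\<Sum>x\<in>G. \<gamma> (x, y)) = q y)}"

definition emd :: "(real \<times> real) set \<Rightarrow> (real \<times> real \<Rightarrow> real) \<Rightarrow> (real \<times> real \<Rightarrow> real) \<Rightarrow> real" where
  "emd G p q = Inf {(\<Sum>x\<in>G. \<Sum>y\<in>G. \<gamma> (x, y) * l1dist x y) | \<gamma>. \<gamma> \<in> couplings G p q}"

definition emd_norm :: "(real \<times> real) set \<Rightarrow> (real \<times> real \<Rightarrow> real) \<Rightarrow> real" where
  "emd_norm G w = Inf {emd G p q + 2 * (\<Sum>x\<in>G. \<bar>r x\<bar>) | p q r.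
      (\<forall>x\<in>G. p x \<ge> 0 \<and> q x \<ge> 0) \<and> (\<Sum>x\<in>G. p x) = (\<Sum>x\<in>G. q x) \<and>
      (\<forall>x\<in>G. p x - q x + r x = w x)}"

end

theory Submission
  imports Defs
begin

text \<open>The residual \<open>r\<close> of any decomposition \<open>w = p - q + r\<close> with balanced \<open>p, q\<close> carries the whole
  mass \<open>\<Sum>w\<close>, so the EMD norm dominates \<open>2 \<bar>\<Sum>w\<bar>\<close>; and perturbing \<open>w\<close> by \<open>u\<close> costs at most
  \<open>2 \<parallel>u\<parallel>\<^sub>1\<close>, since \<open>u\<close> can be absorbed into the residual. With \<open>E = \<parallel>s - \<hat>s\<parallel>\<^sub>E\<^sub>M\<^sub>D\<close> and
  \<open>m = \<parallel>\<hat>s\<parallel>\<^sub>1\<close> the first fact gives \<open>2 \<bar>n - m\<bar> \<le> E \<le> n/2\<close>, so \<open>m > 0\<close>. Writing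
  \<open>a - \<hat>a = (s - \<hat>s)/n + (1/n - 1/m) \<hat>s\<close>, the second fact and homogeneity give
  \<open>\<parallel>a - \<hat>a\<parallel>\<^sub>E\<^sub>M\<^sub>D \<le> E/n + 2 \<bar>n - m\<bar>/n \<le> 2E/n\<close>.\<close>

lemma finite_grid: "finite (grid l)"
proof -
  have "grid l = (\<lambda>(i, j). (real i / 2 ^ l, real j / 2 ^ l)) ` ({..<(2::nat) ^ l} \<times> {..<2 ^ l})"
    unfolding grid_def by auto
  then show ?thesis by simp
qed

lemma couplings_nonempty:
  assumes G: "finite G" and nonneg: "\<forall>x\<in>G. p x \<ge> 0 \<and> q x \<ge> 0"
    and balanced: "(\<Sum>x\<in>G. p x) = (\<Sum>x\<in>G. q x)"
  shows "couplings G p q \<noteq> {}"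
proof (cases "(\<Sum>x\<in>G. p x) = 0")
  case True
  then have "\<forall>x\<in>G. p x = 0" "\<forall>x\<in>G. q x = 0"
    using balanced nonneg sum_nonneg_eq_0_iff[OF G] by metis+
  then have "(\<lambda>_. 0) \<in> couplings G p q" unfolding couplings_def by auto
  then show ?thesis by blast
next
  case False
  define S where "S = (\<Sum>x\<in>G. p x)"
  have "(\<lambda>(x, y). p x * q y / S) \<in> couplings G p q"
    unfolding couplings_def
  proof (intro CollectI conjI ballI)
    fix x y assume "x \<in> G" "y \<in> G"
    then show "0 \<le> (case (x, y) of (x, y) \<Rightarrow> p x * q y / S)"
      using nonneg sum_nonneg[of G p] unfolding S_def by auto
  next
    fix x
    have "(\<Sum>y\<in>G. p x * q y / S) = p x * (\<Sum>y\<in>G. q y) / S"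
      by (simp add: sum_distrib_left sum_divide_distrib)
    also have "\<dots> = p x" using False balanced unfolding S_def by simp
    finally show "(\<Sum>y\<in>G. case (x, y) of (x, y) \<Rightarrow> p x * q y / S) = p x" by simp
  next
    fix y
    have "(\<Sum>x\<in>G. p x * q y / S) = (\<Sum>x\<in>G. p x) * q y / S"
      by (simp add: sum_distrib_right sum_divide_distrib)
    also have "\<dots> = q y" using False balanced unfolding S_def by simp
    finally show "(\<Sum>x\<in>G. case (x, y) of (x, y) \<Rightarrow> p x * q y / S) = q y" by simp
  qed
  then show ?thesis by blast
qed

lemma coupling_cost_nonneg:
  assumes "\<gamma> \<in> couplings G p q"
  shows "(\<Sum>x\<in>G. \<Sum>y\<in>G. \<gamma> (x, y) * l1dist x y) \<ge> 0"
  using assms unfolding couplings_def l1dist_def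
  by (auto intro!: sum_nonneg mult_nonneg_nonneg)

lemma emd_le_coupling_cost:
  assumes "\<gamma> \<in> couplings G p q"
  shows "emd G p q \<le> (\<Sum>x\<in>G. \<Sum>y\<in>G. \<gamma> (x, y) * l1dist x y)"
  unfolding emd_def
  by (rule cInf_lower) (use assms coupling_cost_nonneg in \<open>auto intro!: bdd_belowI[where m = 0]\<close>)

lemma emd_nonneg:
  assumes "couplings G p q \<noteq> {}"
  shows "emd G p q \<ge> 0"
  unfolding emd_def using assms coupling_cost_nonneg
  by (auto intro!: cInf_greatest)

lemma emd_scale_le:
  assumes nonempty: "couplings G p q \<noteq> {}" and c: "c > 0"
  shows "emd G (\<lambda>x. c * p x) (\<lambda>x. c * q x) \<le> c * emd G p q"
proof -
  have "emd G (\<lambda>x. c * p x) (\<lambda>x. c * q x) / c \<le> emd G p q"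
    unfolding emd_def[of G p q]
  proof (rule cInf_greatest)
    fix V assume "V \<in> {\<Sum>x\<in>G. \<Sum>y\<in>G. \<gamma> (x, y) * l1dist x y | \<gamma>. \<gamma> \<in> couplings G p q}"
    then obtain \<gamma> where V: "V = (\<Sum>x\<in>G. \<Sum>y\<in>G. \<gamma> (x, y) * l1dist x y)"
      and \<gamma>: "\<gamma> \<in> couplings G p q" by blast
    have "(\<lambda>z. c * \<gamma> z) \<in> couplings G (\<lambda>x. c * p x) (\<lambda>x. c * q x)"
      using \<gamma> c unfolding couplings_def by (auto simp: sum_distrib_left[symmetric])
    then have "emd G (\<lambda>x. c * p x) (\<lambda>x. c * q x) \<le> (\<Sum>x\<in>G. \<Sum>y\<in>G. c * \<gamma> (x, y) * l1dist x y)"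
      by (rule emd_le_coupling_cost)
    also have "\<dots> = c * V" unfolding V by (simp add: sum_distrib_left mult.assoc)
    finally show "emd G (\<lambda>x. c * p x) (\<lambda>x. c * q x) / c \<le> V" using c by (simp add: field_simps)
  qed (use nonempty in auto)
  then show ?thesis using c by (simp add: field_simps)
qed

lemma emd_norm_le_decomposition:
  assumes G: "finite G" and nonneg: "\<forall>x\<in>G. p x \<ge> 0 \<and> q x \<ge> 0"
    and balanced: "(\<Sum>x\<in>G. p x) = (\<Sum>x\<in>G. q x)" and w: "\<forall>x\<in>G. p x - q x + r x = w x"
  shows "emd_norm G w \<le> emd G p q + 2 * (\<Sum>x\<in>G. \<bar>r x\<bar>)"
  unfolding emd_norm_def
proof (rule cInf_lower)
  show "bdd_below {emd G p q + 2 * (\<Sum>x\<in>G. \<bar>r x\<bar>) | p q r.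
      (\<forall>x\<in>G. p x \<ge> 0 \<and> q x \<ge> 0) \<and> (\<Sum>x\<in>G. p x) = (\<Sum>x\<in>G. q x) \<and> (\<forall>x\<in>G. p x - q x + r x = w x)}"
    using emd_nonneg[OF couplings_nonempty[OF G]]
    by (auto intro!: bdd_belowI[where m = 0] sum_nonneg)
qed (use nonneg balanced w in blast)

lemma emd_norm_greatest:
  assumes "\<And>p q r. \<forall>x\<in>G. p x \<ge> 0 \<and> q x \<ge> 0 \<Longrightarrow> (\<Sum>x\<in>G. p x) = (\<Sum>x\<in>G. q x) \<Longrightarrow>
      \<forall>x\<in>G. p x - q x + r x = w x \<Longrightarrow> B \<le> emd G p q + 2 * (\<Sum>x\<in>G. \<bar>r x\<bar>)"
  shows "B \<le> emd_norm G w"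
  unfolding emd_norm_def
proof (rule cInf_greatest)
  show "{emd G p q + 2 * (\<Sum>x\<in>G. \<bar>r x\<bar>) | p q r.
      (\<forall>x\<in>G. p x \<ge> 0 \<and> q x \<ge> 0) \<and> (\<Sum>x\<in>G. p x) = (\<Sum>x\<in>G. q x) \<and> (\<forall>x\<in>G. p x - q x + r x = w x)} \<noteq> {}"
    by (intro ex_in_conv[THEN iffD1] exI[of _ "emd G (\<lambda>_. 0) (\<lambda>_. 0) + 2 * (\<Sum>x\<in>G. \<bar>w x\<bar>)"])
      (intro CollectI exI[of _ "\<lambda>_. 0"] exI[of _ w], simp)
qed (use assms in blast)

lemma abs_sum_le_emd_norm:
  assumes G: "finite G"
  shows "2 * \<bar>\<Sum>x\<in>G. w x\<bar> \<le> emd_norm G w"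
proof (rule emd_norm_greatest)
  fix p q r
  assume nonneg: "\<forall>x\<in>G. p x \<ge> 0 \<and> q x \<ge> 0" and balanced: "(\<Sum>x\<in>G. p x) = (\<Sum>x\<in>G. q x)"
    and w: "\<forall>x\<in>G. p x - q x + r x = w x"
  have "(\<Sum>x\<in>G. w x) = (\<Sum>x\<in>G. p x - q x + r x)" using w by simp
  also have "\<dots> = (\<Sum>x\<in>G. r x)" using balanced by (simp add: sum.distrib sum_subtractf)
  finally have "\<bar>\<Sum>x\<in>G. w x\<bar> \<le> (\<Sum>x\<in>G. \<bar>r x\<bar>)" using sum_abs[of r G] by simp
  then show "2 * \<bar>\<Sum>x\<in>G. w x\<bar> \<le> emd G p q + 2 * (\<Sum>x\<in>G. \<bar>r x\<bar>)"
    using emd_nonneg[OF couplings_nonempty[OF G nonneg balanced]] by simp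
qed

lemma emd_norm_scale_le:
  assumes G: "finite G" and c: "c > 0"
  shows "emd_norm G (\<lambda>x. c * w x) \<le> c * emd_norm G w"
proof -
  have "emd_norm G (\<lambda>x. c * w x) / c \<le> emd_norm G w"
  proof (rule emd_norm_greatest)
    fix p q r
    assume nonneg: "\<forall>x\<in>G. p x \<ge> 0 \<and> q x \<ge> 0" and balanced: "(\<Sum>x\<in>G. p x) = (\<Sum>x\<in>G. q x)"
      and w: "\<forall>x\<in>G. p x - q x + r x = w x"
    have "emd_norm G (\<lambda>x. c * w x)
        \<le> emd G (\<lambda>x. c * p x) (\<lambda>x. c * q x) + 2 * (\<Sum>x\<in>G. \<bar>c * r x\<bar>)"
      using nonneg balanced w c
      by (intro emd_norm_le_decomposition[OF G])
        (auto simp: sum_distrib_left[symmetric] right_diff_distrib[symmetric] distrib_left[symmetric])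
    also have "\<dots> \<le> c * (emd G p q + 2 * (\<Sum>x\<in>G. \<bar>r x\<bar>))"
      using emd_scale_le[OF couplings_nonempty[OF G nonneg balanced] c] c
      by (simp add: abs_mult sum_distrib_left[symmetric] algebra_simps)
    finally show "emd_norm G (\<lambda>x. c * w x) / c \<le> emd G p q + 2 * (\<Sum>x\<in>G. \<bar>r x\<bar>)"
      using c by (simp add: field_simps)
  qed
  then show ?thesis using c by (simp add: field_simps)
qed

lemma emd_norm_add_le:
  assumes G: "finite G"
  shows "emd_norm G (\<lambda>x. v x + u x) \<le> emd_norm G v + 2 * (\<Sum>x\<in>G. \<bar>u x\<bar>)"
proof -
  have "emd_norm G (\<lambda>x. v x + u x) - 2 * (\<Sum>x\<in>G. \<bar>u x\<bar>) \<le> emd_norm G v"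
  proof (rule emd_norm_greatest)
    fix p q r
    assume nonneg: "\<forall>x\<in>G. p x \<ge> 0 \<and> q x \<ge> 0" and balanced: "(\<Sum>x\<in>G. p x) = (\<Sum>x\<in>G. q x)"
      and v: "\<forall>x\<in>G. p x - q x + r x = v x"
    have "emd_norm G (\<lambda>x. v x + u x) \<le> emd G p q + 2 * (\<Sum>x\<in>G. \<bar>r x + u x\<bar>)"
      using nonneg balanced v by (intro emd_norm_le_decomposition[OF G]) auto
    also have "\<dots> \<le> emd G p q + 2 * (\<Sum>x\<in>G. \<bar>r x\<bar>) + 2 * (\<Sum>x\<in>G. \<bar>u x\<bar>)"
      using sum_mono[of G "\<lambda>x. \<bar>r x + u x\<bar>" "\<lambda>x. \<bar>r x\<bar> + \<bar>u x\<bar>"]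
      by (simp add: abs_triangle_ineq sum.distrib)
    finally show "emd_norm G (\<lambda>x. v x + u x) - 2 * (\<Sum>x\<in>G. \<bar>u x\<bar>)
        \<le> emd G p q + 2 * (\<Sum>x\<in>G. \<bar>r x\<bar>)" by simp
  qed
  then show ?thesis by simp
qed

lemma emd_norm_normalized_diff_le:
  assumes G: "finite G" and sh_nonneg: "\<forall>x\<in>G. sh x \<ge> 0"
    and n: "n > 0" and m: "m > 0" and sh_mass: "(\<Sum>x\<in>G. sh x) = m"
  shows "emd_norm G (\<lambda>x. s x / n - sh x / m) \<le> (emd_norm G (\<lambda>x. s x - sh x) + 2 * \<bar>n - m\<bar>) / n"
proof -
  define c where "c = 1 / n - 1 / m"
  have split: "(\<lambda>x. s x / n - sh x / m) = (\<lambda>x. (1 / n) * (s x - sh x) + c * sh x)"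
    unfolding c_def by (simp add: algebra_simps)
  have "(\<Sum>x\<in>G. \<bar>c * sh x\<bar>) = \<bar>c\<bar> * m"
    using sh_nonneg sh_mass by (simp add: abs_mult sum_distrib_left[symmetric])
  also have "\<dots> = \<bar>c * m\<bar>" using m by (simp add: abs_mult)
  also have "\<dots> = \<bar>(m - n) / n\<bar>"
    unfolding c_def using n m by (simp add: left_diff_distrib diff_divide_distrib)
  also have "\<dots> = \<bar>n - m\<bar> / n" using n by (simp add: abs_minus_commute)
  finally have residual: "(\<Sum>x\<in>G. \<bar>c * sh x\<bar>) = \<bar>n - m\<bar> / n" .
  have "emd_norm G (\<lambda>x. s x / n - sh x / m)
      \<le> emd_norm G (\<lambda>x. (1 / n) * (s x - sh x)) + 2 * (\<Sum>x\<in>G. \<bar>c * sh x\<bar>)"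
    unfolding split by (rule emd_norm_add_le[OF G])
  also have "\<dots> \<le> (1 / n) * emd_norm G (\<lambda>x. s x - sh x) + 2 * \<bar>n - m\<bar> / n"
    using emd_norm_scale_le[OF G, of "1 / n"] n residual by simp
  finally show ?thesis by (simp add: add_divide_distrib)
qed

theorem lemma1:
  fixes l :: nat and n :: real and s sh :: "real \<times> real \<Rightarrow> real"
  assumes "n > 0"
    and "\<forall>x\<in>grid l. s x \<ge> 0" and "\<forall>x\<in>grid l. sh x \<ge> 0"
    and "(\<Sum>x\<in>grid l. \<bar>s x\<bar>) = n"
    and "emd_norm (grid l) (\<lambda>x. s x - sh x) \<le> n / 2"
  shows "emd_norm (grid l)
           (\<lambda>x. s x / (\<Sum>y\<in>grid l. \<bar>s y\<bar>) - sh x / (\<Sum>y\<in>grid l. \<bar>sh y\<bar>))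
         \<le> 4 * emd_norm (grid l) (\<lambda>x. s x - sh x) / n"
proof -
  define E where "E = emd_norm (grid l) (\<lambda>x. s x - sh x)"
  define m where "m = (\<Sum>x\<in>grid l. sh x)"
  have s_mass: "(\<Sum>x\<in>grid l. s x) = n" using assms(2,4) by simp
  have sh_mass: "(\<Sum>x\<in>grid l. \<bar>sh x\<bar>) = m" unfolding m_def using assms(3) by simp
  have "2 * \<bar>\<Sum>x\<in>grid l. s x - sh x\<bar> \<le> E"
    unfolding E_def by (rule abs_sum_le_emd_norm[OF finite_grid])
  then have mass_gap: "2 * \<bar>n - m\<bar> \<le> E" using s_mass by (simp add: sum_subtractf m_def)
  then have "m > 0" using assms(1,5) unfolding E_def by (auto simp: abs_if split: if_splits)
  then have "emd_norm (grid l) (\<lambda>x. s x / n - sh x / m) \<le> (E + 2 * \<bar>n - m\<bar>) / n"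
    unfolding E_def using emd_norm_normalized_diff_le[OF finite_grid assms(3) assms(1)] m_def by simp
  also have "\<dots> \<le> 4 * E / n"
  proof (rule divide_right_mono)
    show "E + 2 * \<bar>n - m\<bar> \<le> 4 * E" using mass_gap by (smt (verit) abs_ge_zero)
  qed (use assms(1) in simp)
  finally show ?thesis unfolding E_def using assms(4) sh_mass by simp
qed

end
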